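(* Fix job indices $s,k'$ and an integer time $\theta\ge r_s$ such that every job $j\le k'$ with $r_s\le r_j<\theta$ satisfies $C^{\mathrm{edf}}_{s,j}\le\theta$. Suppose there is an $(s,k')$-schedule $Q$ with $C_{\max}(Q)>\theta$ and at most $g$ gaps. Then there is an $(s,k')$-schedule $R$ that schedules all jobs $j\le k'$ with $r_s\le r_j<\theta$ and satisfies: (a) $C_{\max}(R)\le\theta$ and $R$ has at most $g$ gaps; (b) if $C_{\max}(R)<\theta$ then $R$ has strictly fewer than $g$ gaps.
   Context: Time is discrete (slots $[t,t+1)$). There are $n$ jobs, job $j$ with integer processing time $p_j\ge1$, release time $r_j$, deadline $d_j$; jobs are indexed so that $d_1<\dots<d_n$, release times are pairwise distinct, and the instance is feasible. A (partial, preemptive) schedule assigns to each slot at most one job so that each job it schedules receives exactly $p_j$ slots in $[r_j,d_j)$; schedules are taken with the earliest-deadline property (whenever busy at slot $t$, run the released, not yet completed scheduled job of smallest deadline). $C_j(S)$ is the completion time of $j$, $C_{\max}(S)=\max_jC_j(S)$. For $s\in\{1,\dots,n\}$, $k\in\{0,\dots,n\}$, an $(s,k)$-schedule is a schedule $S$ with $C_{\max}(S)\le d_k$ scheduling exactly the jobs $j\le k$ with $r_s\le r_j<C_{\max}(S)$; the empty schedule counts, with $C_{\max}=r_s$. Gaps of an $(s,k)$-schedule: maximal idle intervals between its blocks (maximal busy intervals), plus the idle interval from $r_s$ to its first block if nonempty. For $r_j\ge r_s$, $C^{\mathrm{edf}}_{s,j}$ is the minimum completion time of job $j$ over all $(s,j)$-schedules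 that schedule $j$. *)

theory Defs
  imports Main
begin

text \<open>Jobs are indexed by 1..n; job j has processing time p j, release time r j,
  deadline d j. Time is discrete: a schedule maps each integer slot t (the slot [t,t+1))
  to at most one job (None = idle).\<close>

type_synonym schedule = "int \<Rightarrow> nat option"

definition sched_jobs :: "schedule \<Rightarrow> nat set" where
  "sched_jobs S = {j. \<exists>t. S t = Some j}"

definition busy :: "schedule \<Rightarrow> int set" where
  "busy S = {t. S t \<noteq> None}"

definition compl :: "schedule \<Rightarrow> nat \<Rightarrow> int" where
  "compl S j = Max ((\<lambda>t. t + 1) ` {t. S t = Some j})"

text \<open>A (partial, preemptive) schedule with the earliest-deadline property.\<close>
definition valid_schedule ::
  "nat \<Rightarrow> (nat \<Rightarrow> nat) \<Rightarrow> (nat \<Rightarrow> int) \<Rightarrow> (nat \<Rightarrow> int) \<Rightarrow> schedule \<Rightarrow> bool" where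
  "valid_schedule n p r d S \<longleftrightarrow>
     (\<forall>t j. S t = Some j \<longrightarrow> 1 \<le> j \<and> j \<le> n \<and> r j \<le> t \<and> t < d j) \<and>
     (\<forall>j \<in> sched_jobs S. card {t. S t = Some j} = p j) \<and>
     (\<forall>t j j'. S t = Some j \<longrightarrow> j' \<in> sched_jobs S \<longrightarrow> r j' \<le> t \<longrightarrow>
        (\<exists>t'\<ge>t. S t' = Some j') \<longrightarrow> d j \<le> d j')"

definition feasible ::
  "nat \<Rightarrow> (nat \<Rightarrow> nat) \<Rightarrow> (nat \<Rightarrow> int) \<Rightarrow> (nat \<Rightarrow> int) \<Rightarrow> bool" where
  "feasible n p r d \<longleftrightarrow> (\<exists>S. valid_schedule n p r d S \<and> sched_jobs S = {1..n})"

definition cmax :: "(nat \<Rightarrow> int) \<Rightarrow> nat \<Rightarrow> schedule \<Rightarrow> int" where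
  "cmax r s S = (if busy S = {} then r s else Max ((\<lambda>t. t + 1) ` busy S))"

definition sk_schedule ::
  "nat \<Rightarrow> (nat \<Rightarrow> nat) \<Rightarrow> (nat \<Rightarrow> int) \<Rightarrow> (nat \<Rightarrow> int) \<Rightarrow> nat \<Rightarrow> nat \<Rightarrow> schedule \<Rightarrow> bool" where
  "sk_schedule n p r d s k S \<longleftrightarrow>
     valid_schedule n p r d S \<and> cmax r s S \<le> d k \<and>
     sched_jobs S = {j. 1 \<le> j \<and> j \<le> k \<and> r s \<le> r j \<and> r j < cmax r s S}"

text \<open>Gaps of an (s,k)-schedule: maximal idle intervals [a,b) with a \<ge> r s that end
  at a busy slot b (i.e. lie before the last block) and start either at r s or right
  after a busy slot.\<close>
definition gaps :: "(nat \<Rightarrow> int) \<Rightarrow> nat \<Rightarrow> schedule \<Rightarrow> (int \<times> int) set" where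
  "gaps r s S = {(a, b). r s \<le> a \<and> a < b \<and> (\<forall>t. a \<le> t \<and> t < b \<longrightarrow> S t = None) \<and>
       S b \<noteq> None \<and> (a = r s \<or> S (a - 1) \<noteq> None)}"

end

theory Submission
  imports Defs
begin

(*
  Let J be the jobs j \<le> k' released in [r_s, \<theta>); Q schedules all of them because it ends after
  \<theta>. Among the schedules of exactly J that coincide with Q before a slot z, one that first
  minimises the sum of its busy slots from z on and then maximises the sum of t * d_j over its
  busy slots t is EDF and work-conserving from z on (exchange arguments). If such a normal form
  is idle somewhere in [z, \<theta>) or z = r_s, it is idle from \<theta> on: a job j running at or after
  \<theta> would, together with the jobs of deadline at most d_j released in the last stretch of
  [z, \<theta>) busy with such jobs, need more room than the (s,j)-schedule finishing j by \<theta> allows.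
  Choosing z by a discrete intermediate value argument so that the work Q does on J from z on
  exactly fills [z, \<theta>), the normal form R is busy exactly on [z, \<theta>) and equals Q before z.
  So every gap of R is a gap of Q, except that a gap ending at z is stretched to the next busy
  slot of Q; and if R ends before \<theta>, then z = \<theta> and the gap of Q around \<theta> - 1 is lost.
*)

lemma valid_schedule_slot:
  "valid_schedule n p r d S \<Longrightarrow> S t = Some j \<Longrightarrow> 1 \<le> j \<and> j \<le> n \<and> r j \<le> t \<and> t < d j"
  unfolding valid_schedule_def by blast

lemma valid_schedule_card:
  "valid_schedule n p r d S \<Longrightarrow> j \<in> sched_jobs S \<Longrightarrow> card {t. S t = Some j} = p j"
  unfolding valid_schedule_def by blast

lemma valid_schedule_edf:
  "valid_schedule n p r d S \<Longrightarrow> S t = Some j \<Longrightarrow> S t' = Some j' \<Longrightarrow> r j' \<le> t \<Longrightarrow> t \<le> t'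
   \<Longrightarrow> d j \<le> d j'"
  unfolding valid_schedule_def sched_jobs_def by blast

lemma finite_busy_valid_schedule:
  assumes "valid_schedule n p r d S"
  shows "finite (busy S)"
proof (rule finite_subset)
  show "busy S \<subseteq> (\<Union>j\<in>{1..n}. {r j..<d j})"
    using valid_schedule_slot[OF assms] unfolding busy_def by fastforce
qed auto

lemma finite_slots_if_finite_busy: "finite (busy S) \<Longrightarrow> finite {t. S t = Some j}"
  by (rule finite_subset[of _ "busy S"]) (auto simp: busy_def)

lemma le_cmax: "finite (busy S) \<Longrightarrow> S t \<noteq> None \<Longrightarrow> t + 1 \<le> cmax r s S"
  unfolding cmax_def busy_def by (auto intro!: Max_ge)

lemma cmax_le:
  "finite (busy S) \<Longrightarrow> \<forall>t. S t \<noteq> None \<longrightarrow> t < b \<Longrightarrow> r s \<le> b \<Longrightarrow> cmax r s S \<le> b"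
  unfolding cmax_def busy_def by (auto simp: Max_le_iff)

lemma cmax_ge_release:
  assumes fin: "finite (busy S)" and "\<forall>t. S t \<noteq> None \<longrightarrow> r s \<le> t"
  shows "r s \<le> cmax r s S"
proof (cases "busy S = {}")
  case False
  then obtain t where "S t \<noteq> None"
    by (auto simp: busy_def)
  with assms(2) le_cmax[OF fin this, of r s] show ?thesis
    by force
qed (simp add: cmax_def)

lemma compl_last_slot:
  assumes "finite {t. S t = Some j}" "j \<in> sched_jobs S"
  shows "S (compl S j - 1) = Some j" and "S t = Some j \<Longrightarrow> t < compl S j"
proof -
  have "compl S j \<in> (\<lambda>t. t + 1) ` {t. S t = Some j}"
    unfolding compl_def using assms by (intro Max_in) (auto simp: sched_jobs_def)
  then show "S (compl S j - 1) = Some j" by auto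
  show "t < compl S j" if "S t = Some j"
  proof -
    have "t + 1 \<le> compl S j"
      unfolding compl_def using assms(1) that by (intro Max_ge) auto
    then show ?thesis by simp
  qed
qed

lemma finite_gaps: "finite (busy S) \<Longrightarrow> finite (gaps r s S)"
  by (rule finite_subset[of _ "\<Union>b\<in>busy S. {r s..<b} \<times> {b}"]) (auto simp: gaps_def busy_def)

lemma first_busy_slot_from:
  assumes "finite (busy S)" "z \<le> t" "S t \<noteq> None"
  obtains b where "z \<le> b" "S b \<noteq> None" "\<forall>t. z \<le> t \<and> t < b \<longrightarrow> S t = None"
proof -
  let ?B = "{t \<in> busy S. z \<le> t}"
  have fin: "finite ?B" and ne: "t \<in> ?B"
    using assms by (auto simp: busy_def)
  have "Min ?B \<in> ?B"
    using Min_in[OF fin] ne by blast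
  moreover have "\<forall>t'\<in>?B. Min ?B \<le> t'"
    using fin by simp
  ultimately show thesis
    by (intro that[of "Min ?B"]) (auto simp: busy_def)
qed

lemma gap_around_idle_slot:
  assumes fin: "finite (busy S)" and m: "r s \<le> m" "S m = None" and later: "m < t" "S t \<noteq> None"
  obtains a b where "(a, b) \<in> gaps r s S" "a \<le> m" "m < b"
proof -
  from later(1) have "m + 1 \<le> t"
    by simp
  then obtain b where "m + 1 \<le> b" "S b \<noteq> None" "\<forall>t. m + 1 \<le> t \<and> t < b \<longrightarrow> S t = None"
    using first_busy_slot_from[OF fin _ later(2)] by blast
  then have b: "m < b" "S b \<noteq> None" "\<forall>t. m < t \<and> t < b \<longrightarrow> S t = None"
    by auto
  define A where "A = {a. r s \<le> a \<and> a \<le> m \<and> (\<forall>t. a \<le> t \<and> t < b \<longrightarrow> S t = None)}"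
  have "S t = None" if "m \<le> t" "t < b" for t
    using m(2) b(3) that by (cases "t = m") auto
  then have "m \<in> A"
    using m(1) by (simp add: A_def)
  moreover have "finite A"
    by (rule finite_subset[of _ "{r s..m}"]) (auto simp: A_def)
  ultimately obtain a where a: "a \<in> A" "\<forall>a'\<in>A. a \<le> a'"
    using Min_in[of A] Min_le[of A] by (metis empty_iff)
  have "a - 1 \<notin> A"
    using a(2) by fastforce
  moreover have "a - 1 \<in> A" if "a \<noteq> r s" "S (a - 1) = None"
  proof -
    have "S t = None" if "a - 1 \<le> t" "t < b" for t
      using a(1) \<open>S (a - 1) = None\<close> that by (cases "t = a - 1") (auto simp: A_def)
    then show ?thesis
      using a(1) \<open>a \<noteq> r s\<close> by (auto simp: A_def)
  qed
  ultimately have "a = r s \<or> S (a - 1) \<noteq> None"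
    by blast
  with a(1) b have "(a, b) \<in> gaps r s S"
    by (auto simp: gaps_def A_def)
  with a(1) b(1) show thesis
    using that by (auto simp: A_def)
qed

lemma gaps_agree_below:
  assumes "\<forall>t<z. S t = Q t" "b < z"
  shows "(a, b) \<in> gaps r s S \<longleftrightarrow> (a, b) \<in> gaps r s Q"
  using assms unfolding gaps_def by auto

lemma card_gaps_le_if_agree_below:
  assumes agree: "\<forall>t<z. S t = Q t" and ends: "\<forall>(a, b) \<in> gaps r s S. b \<le> z"
    and fin: "finite (busy Q)" and later: "z \<le> t" "Q t \<noteq> None"
  shows "card (gaps r s S) \<le> card (gaps r s Q)"
proof -
  obtain b' where b': "z \<le> b'" "Q b' \<noteq> None" "\<forall>t. z \<le> t \<and> t < b' \<longrightarrow> Q t = None"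
    using first_busy_slot_from[OF fin later] .
  \<comment> \<open>the gap of S ending at z is stretched to the first busy slot of Q from z on\<close>
  define f where "f = (\<lambda>(a :: int, b :: int). if b < z then (a, b) else (a, b'))"
  have "f (a, b) \<in> gaps r s Q" if ab: "(a, b) \<in> gaps r s S" for a b
  proof (cases "b < z")
    case True
    then show ?thesis using ab gaps_agree_below[OF agree] by (simp add: f_def)
  next
    case False
    with ab ends have bz: "b = z" by auto
    have "Q t = None" if "a \<le> t" "t < b'" for t
      using ab agree b'(3) bz that unfolding gaps_def by (cases "t < z") auto
    with ab agree b' bz show ?thesis
      unfolding f_def gaps_def by auto
  qed
  then have maps: "f ` gaps r s S \<subseteq> gaps r s Q"
    by auto
  have "inj_on f (gaps r s S)"
  proof (rule inj_onI, clarify)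
    fix a b a' b' assume "(a, b) \<in> gaps r s S" "(a', b') \<in> gaps r s S" "f (a, b) = f (a', b')"
    moreover from this(1,2) have "b \<le> z" "b' \<le> z"
      using ends by auto
    ultimately show "a = a' \<and> b = b'"
      using b'(1) by (auto simp: f_def split: if_splits)
  qed
  then show ?thesis
    using maps finite_gaps[OF fin] by (rule card_inj_on_le)
qed

lemma card_gaps_less_if_agree_below:
  assumes agree: "\<forall>t<z. S t = Q t" and idle: "\<forall>t\<ge>z. S t = None"
    and fin: "finite (busy Q)" and gap: "(a, b) \<in> gaps r s Q" "z \<le> b"
  shows "card (gaps r s S) < card (gaps r s Q)"
proof -
  have "gaps r s S \<subseteq> gaps r s Q - {(a, b)}"
  proof clarify
    fix a' b' assume ab': "(a', b') \<in> gaps r s S"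
    then have "S b' \<noteq> None" by (simp add: gaps_def)
    with idle have "b' < z" by (meson not_less)
    then show "(a', b') \<in> gaps r s Q - {(a, b)}"
      using ab' gaps_agree_below[OF agree] gap(2) by auto
  qed
  then have "card (gaps r s S) \<le> card (gaps r s Q - {(a, b)})"
    using finite_gaps[OF fin] by (intro card_mono) auto
  also have "\<dots> < card (gaps r s Q)"
    using finite_gaps[OF fin] gap(1) by (rule card_Diff1_less)
  finally show ?thesis .
qed

lemma slot_before_completion:
  assumes d: "strict_mono_on {1..n} d" and valid: "valid_schedule n p r d S"
    and j: "j \<in> sched_jobs S" and t: "S t = Some i" and i: "i \<le> j" "r i < compl S j"
  shows "t < compl S j"
proof (rule ccontr)
  assume late: "\<not> t < compl S j"
  note last = compl_last_slot[OF finite_slots_if_finite_busy[OF finite_busy_valid_schedule[OF valid]] j]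
  \<comment> \<open>EDF in the last slot of j, where i is already released\<close>
  have "d j \<le> d i"
    using valid_schedule_edf[OF valid last(1) t] i(2) late by simp
  moreover have "j \<in> {1..n}" "i \<in> {1..n}"
    using valid_schedule_slot[OF valid] last(1) t by auto
  ultimately have "i = j"
    using strict_mono_on_less_eq[OF d] i(1) by fastforce
  with last(2) t late show False
    by simp
qed

lemma work_released_before_completion:
  assumes d: "strict_mono_on {1..n} d" and S: "sk_schedule n p r d s j S"
    and j: "j \<in> sched_jobs S" and w: "r s \<le> w"
  shows "(\<Sum>i | 1 \<le> i \<and> i \<le> j \<and> w \<le> r i \<and> r i < compl S j. p i) \<le> nat (compl S j - w)"
proof -
  define c where "c = compl S j"
  define I where "I = {i. 1 \<le> i \<and> i \<le> j \<and> w \<le> r i \<and> r i < c}"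
  have valid: "valid_schedule n p r d S"
    and jobs: "sched_jobs S = {i. 1 \<le> i \<and> i \<le> j \<and> r s \<le> r i \<and> r i < cmax r s S}"
    using S by (auto simp: sk_schedule_def)
  have fin: "finite (busy S)"
    by (rule finite_busy_valid_schedule[OF valid])
  have "c \<le> cmax r s S"
    using le_cmax[OF fin, of "c - 1"] compl_last_slot(1)[OF finite_slots_if_finite_busy[OF fin] j]
    by (simp add: c_def)
  then have I_sched: "I \<subseteq> sched_jobs S"
    unfolding jobs I_def using w by auto
  have slots: "{t. S t = Some i} \<subseteq> {w..<c}" if i: "i \<in> I" for i
    using valid_schedule_slot[OF valid] slot_before_completion[OF d valid j] i
    by (fastforce simp: I_def c_def)
  have "finite I"
    by (rule finite_subset[of _ "{..j}"]) (auto simp: I_def)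
  have "(\<Sum>i\<in>I. p i) = (\<Sum>i\<in>I. card {t. S t = Some i})"
    using valid_schedule_card[OF valid] I_sched by (intro sum.cong) auto
  also have "\<dots> = card (\<Union>i\<in>I. {t. S t = Some i})"
    using \<open>finite I\<close> finite_slots_if_finite_busy[OF fin] by (intro card_UN_disjoint[symmetric]) auto
  also have "\<dots> \<le> card {w..<c}"
    using slots by (intro card_mono) auto
  finally show ?thesis
    unfolding I_def c_def by simp
qed

definition edf_from :: "(nat \<Rightarrow> int) \<Rightarrow> (nat \<Rightarrow> int) \<Rightarrow> int \<Rightarrow> schedule \<Rightarrow> bool" where
  "edf_from r d z S \<longleftrightarrow>
     (\<forall>t t' i j. z \<le> t \<longrightarrow> t \<le> t' \<longrightarrow> S t = Some i \<longrightarrow> S t' = Some j \<longrightarrow> r j \<le> t \<longrightarrow> d i \<le> d j)"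

definition work_conserving_from :: "(nat \<Rightarrow> int) \<Rightarrow> int \<Rightarrow> schedule \<Rightarrow> bool" where
  "work_conserving_from r z S \<longleftrightarrow>
     (\<forall>t t' j. z \<le> t \<longrightarrow> S t = None \<longrightarrow> S t' = Some j \<longrightarrow> r j \<le> t \<longrightarrow> t' \<le> t)"

lemma release_after_blocking_slot:
  assumes edf: "edf_from r d z S" and wc: "work_conserving_from r z S" and "z \<le> x"
    and blocking: "S x = None \<or> (\<exists>y. S x = Some y \<and> D < d y)"
    and t: "x < t" "S t = Some i" "d i \<le> D"
  shows "x < r i"
proof (rule ccontr)
  assume "\<not> x < r i"
  then have "r i \<le> x" by simp
  from blocking show False
  proof
    assume "S x = None"
    with wc \<open>z \<le> x\<close> \<open>r i \<le> x\<close> t(2) have "t \<le> x"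
      unfolding work_conserving_from_def by blast
    with t(1) show False
      by simp
  next
    assume "\<exists>y. S x = Some y \<and> D < d y"
    then obtain y where "S x = Some y" "D < d y"
      by blast
    moreover from this(1) have "d y \<le> d i"
      using edf[unfolded edf_from_def, rule_format, of x t y i] \<open>z \<le> x\<close> t \<open>r i \<le> x\<close> by simp
    ultimately show False
      using t(3) by simp
  qed
qed

lemma edf_block_start:
  assumes edf: "edf_from r d z S" and wc: "work_conserving_from r z S"
    and start: "(\<exists>t. z \<le> t \<and> t < \<theta> \<and> S t = None) \<or> (\<forall>t i. S t = Some i \<longrightarrow> z \<le> r i)"
    and "z \<le> \<theta>"
  obtains w where "z \<le> w" "w \<le> \<theta>"
    "\<forall>t. w \<le> t \<and> t < \<theta> \<longrightarrow> (\<exists>i. S t = Some i \<and> d i \<le> D)"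
    "\<forall>t i. w \<le> t \<longrightarrow> S t = Some i \<longrightarrow> d i \<le> D \<longrightarrow> w \<le> r i"
proof -
  \<comment> \<open>w is one past the last slot before \<theta> that is idle or runs a job with deadline beyond D\<close>
  define X where "X = {t. z \<le> t \<and> t < \<theta> \<and> (S t = None \<or> (\<exists>i. S t = Some i \<and> D < d i))}"
  have "finite X"
    by (rule finite_subset[of _ "{z..<\<theta>}"]) (auto simp: X_def)
  show thesis
  proof (cases "X = {}")
    case True
    then have "\<forall>t i. S t = Some i \<longrightarrow> z \<le> r i"
      using start by (auto simp: X_def)
    with True \<open>z \<le> \<theta>\<close> show thesis
      by (intro that[of z]) (auto simp: X_def not_less)
  next
    case False
    define x where "x = Max X"
    have x: "x \<in> X" "\<forall>t\<in>X. t \<le> x"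
      using \<open>finite X\<close> False by (auto simp: x_def)
    have "\<exists>i. S t = Some i \<and> d i \<le> D" if "x + 1 \<le> t" "t < \<theta>" for t
    proof -
      have "t \<notin> X"
        using x(2) that(1) by fastforce
      with x(1) that show ?thesis
        by (cases "S t") (auto simp: X_def)
    qed
    moreover have "x + 1 \<le> r i" if "x + 1 \<le> t" "S t = Some i" "d i \<le> D" for t i
      using release_after_blocking_slot[OF edf wc, of x D t i] x(1) that by (auto simp: X_def)
    ultimately show thesis
      using x(1) by (intro that[of "x + 1"]) (auto simp: X_def)
  qed
qed

lemma discrete_intermediate_value:
  fixes f :: "int \<Rightarrow> int"
  assumes "a \<le> b" "0 \<le> f a" "f b \<le> 0" and steps: "\<And>z. f z - 1 \<le> f (z + 1)"
  obtains z where "a \<le> z" "z \<le> b" "f z = 0"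
proof -
  define Z where "Z = {z. a \<le> z \<and> z \<le> b \<and> f z \<le> 0}"
  have "finite Z" "b \<in> Z"
    using assms by (auto simp: Z_def intro: finite_subset[of _ "{a..b}"])
  then obtain m where m: "m \<in> Z" "\<forall>z\<in>Z. m \<le> z"
    using Min_in[of Z] Min_le[of Z] by (metis empty_iff)
  have "0 \<le> f m"
  proof (cases "m = a")
    case False
    with m(1) have "a \<le> m - 1" "m - 1 \<le> b"
      by (auto simp: Z_def)
    moreover have "m - 1 \<notin> Z"
      using m(2) by force
    ultimately have "0 < f (m - 1)"
      by (auto simp: Z_def)
    with steps[of "m - 1"] show ?thesis
      by simp
  qed (use assms in simp)
  with m(1) show thesis
    by (intro that[of m]) (auto simp: Z_def)
qed

locale truncation_setting =
  fixes n :: nat and p :: "nat \<Rightarrow> nat" and r d :: "nat \<Rightarrow> int"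
    and s k' :: nat and \<theta> :: int and Q :: schedule
  assumes p_pos: "\<forall>j \<in> {1..n}. 1 \<le> p j"
    and d_mono: "strict_mono_on {1..n} d"
    and k': "k' \<in> {1..n}"
    and theta: "r s \<le> \<theta>"
    and edf: "\<forall>j. 1 \<le> j \<and> j \<le> k' \<and> r s \<le> r j \<and> r j < \<theta> \<longrightarrow>
               (\<exists>S. sk_schedule n p r d s j S \<and> j \<in> sched_jobs S \<and> compl S j \<le> \<theta>)"
    and Q: "sk_schedule n p r d s k' Q"
    and Q_late: "\<theta> < cmax r s Q"
begin

definition early_jobs :: "nat set" where
  "early_jobs = {j. 1 \<le> j \<and> j \<le> k' \<and> r s \<le> r j \<and> r j < \<theta>}"

lemma early_jobs_subset: "early_jobs \<subseteq> {1..n}"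
  using k' by (auto simp: early_jobs_def)

lemma finite_early_jobs: "finite early_jobs"
  using early_jobs_subset by (rule finite_subset) simp

lemma valid_Q: "valid_schedule n p r d Q"
  using Q by (simp add: sk_schedule_def)

lemma sched_jobs_Q: "sched_jobs Q = {j. 1 \<le> j \<and> j \<le> k' \<and> r s \<le> r j \<and> r j < cmax r s Q}"
  using Q by (simp add: sk_schedule_def)

lemma finite_busy_Q: "finite (busy Q)"
  by (rule finite_busy_valid_schedule[OF valid_Q])

lemma early_jobs_in_Q: "early_jobs \<subseteq> sched_jobs Q"
  using Q_late by (auto simp: early_jobs_def sched_jobs_Q)

lemma Q_slot_before_theta: "t < \<theta> \<Longrightarrow> Q t = Some j \<Longrightarrow> j \<in> early_jobs"
  using valid_schedule_slot[OF valid_Q] sched_jobs_Q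
  by (fastforce simp: early_jobs_def sched_jobs_def)

lemma Q_busy_after_theta: obtains t where "\<theta> \<le> t" "Q t \<noteq> None"
proof -
  have "busy Q \<noteq> {}"
    using Q_late theta by (auto simp: cmax_def)
  then have "cmax r s Q \<in> (\<lambda>t. t + 1) ` busy Q"
    unfolding cmax_def using finite_busy_Q by (auto intro!: Max_in)
  with Q_late show thesis
    by (auto simp: busy_def intro: that)
qed

definition Q_early :: schedule where
  "Q_early t = (if Q t \<in> Some ` early_jobs then Q t else None)"

definition reschedules :: "int \<Rightarrow> schedule set" where
  "reschedules z = {S. (\<forall>t j. S t = Some j \<longrightarrow> j \<in> early_jobs \<and> r j \<le> t \<and> t < d j) \<and>
       (\<forall>j\<in>early_jobs. card {t. S t = Some j} = p j) \<and> (\<forall>t<z. S t = Q t)}"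

lemma reschedules_slot: "S \<in> reschedules z \<Longrightarrow> S t = Some j \<Longrightarrow> j \<in> early_jobs \<and> r j \<le> t \<and> t < d j"
  unfolding reschedules_def by blast

lemma reschedules_card: "S \<in> reschedules z \<Longrightarrow> j \<in> early_jobs \<Longrightarrow> card {t. S t = Some j} = p j"
  unfolding reschedules_def by blast

lemma reschedules_agree: "S \<in> reschedules z \<Longrightarrow> t < z \<Longrightarrow> S t = Q t"
  unfolding reschedules_def by blast

lemma Q_early_in_reschedules:
  assumes "z \<le> \<theta>"
  shows "Q_early \<in> reschedules z"
proof -
  have "{t. Q_early t = Some j} = {t. Q t = Some j}" if "j \<in> early_jobs" for j
    using that by (auto simp: Q_early_def)
  then have "\<forall>j\<in>early_jobs. card {t. Q_early t = Some j} = p j"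
    using valid_schedule_card[OF valid_Q] early_jobs_in_Q by auto
  moreover have "Q_early t = Q t" if "t < \<theta>" for t
    using Q_slot_before_theta[OF that] by (cases "Q t") (auto simp: Q_early_def)
  then have "\<forall>t<z. Q_early t = Q t"
    using assms by simp
  ultimately show ?thesis
    using valid_schedule_slot[OF valid_Q] by (auto simp: reschedules_def Q_early_def)
qed

lemma busy_reschedules_subset:
  assumes S: "S \<in> reschedules z"
  shows "busy S \<subseteq> (\<Union>j\<in>early_jobs. {r j..<d j})"
proof
  fix t assume "t \<in> busy S"
  then obtain j where "S t = Some j"
    by (auto simp: busy_def)
  with reschedules_slot[OF S] show "t \<in> (\<Union>j\<in>early_jobs. {r j..<d j})"
    by fastforce
qed

lemma finite_busy_reschedules: "S \<in> reschedules z \<Longrightarrow> finite (busy S)"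
  by (rule finite_subset[OF busy_reschedules_subset]) (auto simp: finite_early_jobs)

lemma finite_reschedules: "finite (reschedules z)"
proof (rule finite_subset)
  let ?T = "\<Union>j\<in>early_jobs. {r j..<d j}"
  show "reschedules z \<subseteq> {S. \<forall>t. (t \<in> ?T \<longrightarrow> S t \<in> insert None (Some ` early_jobs)) \<and> (t \<notin> ?T \<longrightarrow> S t = None)}"
  proof (intro subsetI CollectI allI conjI impI)
    fix S t assume S: "S \<in> reschedules z"
    show "S t \<in> insert None (Some ` early_jobs)"
      using reschedules_slot[OF S, of t] by (cases "S t") auto
    show "S t = None" if "t \<notin> ?T"
      using busy_reschedules_subset[OF S] that unfolding busy_def by blast
  qed
  show "finite {S. \<forall>t. (t \<in> ?T \<longrightarrow> S t \<in> insert None (Some ` early_jobs)) \<and> (t \<notin> ?T \<longrightarrow> S t = None)}"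
    using finite_early_jobs by (intro finite_set_of_finite_funs) auto
qed

lemma card_slots_reschedules_le:
  assumes S: "S \<in> reschedules z"
  shows "card {t. S t = Some j} \<le> p j"
proof (cases "j \<in> early_jobs")
  case False
  then have "{t. S t = Some j} = {}"
    using reschedules_slot[OF S] by blast
  then show ?thesis
    by simp
qed (simp add: reschedules_card[OF S])

lemma card_busy_reschedules:
  assumes S: "S \<in> reschedules z"
  shows "card (busy S) = (\<Sum>j\<in>early_jobs. p j)"
proof -
  have "busy S = (\<Union>j\<in>early_jobs. {t. S t = Some j})"
    unfolding busy_def using reschedules_slot[OF S] by blast
  also have "card \<dots> = (\<Sum>j\<in>early_jobs. card {t. S t = Some j})"
    using finite_early_jobs finite_slots_if_finite_busy[OF finite_busy_reschedules[OF S]]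
    by (intro card_UN_disjoint) auto
  finally show ?thesis
    by (simp add: reschedules_card[OF S])
qed

lemma reschedules_late_slot_late_in_Q:
  assumes S: "S \<in> reschedules z" and t: "z \<le> t" "S t = Some j"
  shows "\<exists>t'\<ge>z. Q t' = Some j"
proof (rule ccontr)
  assume none: "\<not> (\<exists>t'\<ge>z. Q t' = Some j)"
  have "{t. Q t = Some j} \<subseteq> {t. S t = Some j} - {t}"
  proof
    fix t' assume "t' \<in> {t. Q t = Some j}"
    with none have "Q t' = Some j" "t' < z"
      by (auto simp: not_le)
    with reschedules_agree[OF S] t(1) show "t' \<in> {t. S t = Some j} - {t}"
      by auto
  qed
  moreover have fin: "finite {t. S t = Some j}"
    using finite_slots_if_finite_busy[OF finite_busy_reschedules[OF S]] .
  ultimately have "card {t. Q t = Some j} \<le> card ({t. S t = Some j} - {t})"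
    by (intro card_mono) auto
  also have "\<dots> < card {t. S t = Some j}"
    using fin t(2) by (intro card_Diff1_less) auto
  finally have "card {t. Q t = Some j} < card {t. S t = Some j}" .
  moreover have "j \<in> early_jobs"
    using reschedules_slot[OF S t(2)] by blast
  ultimately show False
    using reschedules_card[OF S] valid_schedule_card[OF valid_Q] early_jobs_in_Q by auto
qed

lemma exchange_slots_reschedules:
  assumes S: "S \<in> reschedules z" and late: "z \<le> t" "z \<le> t'"
    and fits: "\<And>j. S t' = Some j \<Longrightarrow> r j \<le> t \<and> t < d j" "\<And>j. S t = Some j \<Longrightarrow> r j \<le> t' \<and> t' < d j"
  shows "S(t := S t', t' := S t) \<in> reschedules z"
proof -
  define \<tau> where "\<tau> = id(t := t', t' := t)"
  have invol: "\<tau> (\<tau> u) = u" for u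
    by (simp add: \<tau>_def)
  have upd: "S(t := S t', t' := S t) = S \<circ> \<tau>"
    by (simp add: \<tau>_def fun_eq_iff)
  have "inj \<tau>"
    using invol by (metis injI)
  moreover have "{u. (S \<circ> \<tau>) u = Some j} = \<tau> ` {u. S u = Some j}" for j
  proof (intro equalityI subsetI)
    fix u assume "u \<in> {u. (S \<circ> \<tau>) u = Some j}"
    then show "u \<in> \<tau> ` {u. S u = Some j}"
      using image_eqI[of u \<tau> "\<tau> u"] invol by simp
  qed (auto simp: invol)
  ultimately have "card {u. (S \<circ> \<tau>) u = Some j} = card {u. S u = Some j}" for j
    by (simp add: card_image inj_on_subset)
  moreover have "j \<in> early_jobs \<and> r j \<le> u \<and> u < d j" if "(S \<circ> \<tau>) u = Some j" for u j
    using that fits reschedules_slot[OF S, of _ j] by (auto simp: \<tau>_def split: if_splits)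
  moreover have "(S \<circ> \<tau>) u = Q u" if "u < z" for u
    using that late reschedules_agree[OF S] by (simp add: \<tau>_def)
  ultimately show ?thesis
    using reschedules_card[OF S] unfolding upd by (simp add: reschedules_def)
qed

definition late_load :: "int \<Rightarrow> schedule \<Rightarrow> int" where
  "late_load z S = (\<Sum>t | z \<le> t \<and> S t \<noteq> None. t)"

definition deadline_weight :: "schedule \<Rightarrow> int" where
  "deadline_weight S = (\<Sum>t\<in>busy S. t * d (the (S t)))"

lemma late_load_move_earlier:
  assumes fin: "finite (busy S)" and t: "z \<le> t" "t < t'" "S t = None" "S t' \<noteq> None"
  shows "late_load z (S(t := S t', t' := S t)) < late_load z S"
proof -
  define B where "B = {u. z \<le> u \<and> S u \<noteq> None}"
  have "finite B"
    using fin by (rule finite_subset[rotated]) (auto simp: B_def busy_def)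
  have "{u. z \<le> u \<and> (S(t := S t', t' := S t)) u \<noteq> None} = insert t (B - {t'})"
    using t by (auto simp: B_def)
  then have "late_load z (S(t := S t', t' := S t)) = t + \<Sum>(B - {t'})"
    unfolding late_load_def using \<open>finite B\<close> t(3) by (simp add: B_def)
  also have "\<dots> = t + \<Sum>B - t'"
    using \<open>finite B\<close> t by (simp add: sum_diff1 B_def)
  finally show ?thesis
    using t(2) by (simp add: late_load_def B_def)
qed

lemma late_load_swap:
  assumes "z \<le> t" "z \<le> t'" "S t \<noteq> None" "S t' \<noteq> None"
  shows "late_load z (S(t := S t', t' := S t)) = late_load z S"
proof -
  have "{u. z \<le> u \<and> (S(t := S t', t' := S t)) u \<noteq> None} = {u. z \<le> u \<and> S u \<noteq> None}"
    using assms by auto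
  then show ?thesis
    by (simp add: late_load_def)
qed

lemma deadline_weight_swap:
  assumes fin: "finite (busy S)" and t: "S t = Some i" "S t' = Some j" "t < t'" and dd: "d j < d i"
  shows "deadline_weight S < deadline_weight (S(t := S t', t' := S t))"
proof -
  let ?S' = "S(t := S t', t' := S t)"
  let ?w = "\<lambda>S u. u * d (the (S u))"
  have busy: "busy ?S' = busy S" and sub: "{t, t'} \<subseteq> busy S"
    using t by (auto simp: busy_def)
  have "(\<Sum>u\<in>busy S. ?w ?S' u - ?w S u) = (\<Sum>u\<in>{t, t'}. ?w ?S' u - ?w S u)"
    using fin sub by (intro sum.mono_neutral_right) auto
  also have "\<dots> = (t' - t) * (d i - d j)"
    using t by (simp add: algebra_simps)
  also have "\<dots> > 0"
    using t dd by simp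
  finally show ?thesis
    unfolding deadline_weight_def busy by (simp add: sum_subtractf)
qed

lemma normal_form_exists:
  assumes "z \<le> \<theta>"
  obtains S where "S \<in> reschedules z" "edf_from r d z S" "work_conserving_from r z S"
proof -
  obtain S1 where S1: "is_arg_min (late_load z) (\<lambda>S. S \<in> reschedules z) S1"
    using ex_is_arg_min_if_finite[OF finite_reschedules] Q_early_in_reschedules[OF assms] by blast
  define M1 where "M1 = {S \<in> reschedules z. late_load z S = late_load z S1}"
  have "finite M1" "S1 \<in> M1"
    using finite_reschedules S1 by (auto simp: M1_def is_arg_min_def)
  then obtain S where S: "is_arg_min (\<lambda>S. - deadline_weight S) (\<lambda>S. S \<in> M1) S"
    using ex_is_arg_min_if_finite by blast
  have SR: "S \<in> reschedules z" and load: "late_load z S = late_load z S1"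
    using S by (auto simp: is_arg_min_def M1_def)
  have fin: "finite (busy S)"
    by (rule finite_busy_reschedules[OF SR])
  have "d i \<le> d j"
    if t: "z \<le> t" "t \<le> t'" "S t = Some i" "S t' = Some j" "r j \<le> t" for t t' i j
  proof (rule ccontr)
    assume "\<not> d i \<le> d j"
    then have dd: "d j < d i" by simp
    with t have "t < t'"
      by (cases "t = t'") auto
    have "S(t := S t', t' := S t) \<in> reschedules z"
      using t \<open>t < t'\<close> dd reschedules_slot[OF SR t(4)] reschedules_slot[OF SR t(3)]
      by (intro exchange_slots_reschedules[OF SR]) auto
    with load t late_load_swap[of z t t' S] have "S(t := S t', t' := S t) \<in> M1"
      by (simp add: M1_def)
    with S deadline_weight_swap[OF fin t(3,4) \<open>t < t'\<close> dd] show False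
      by (auto simp: is_arg_min_def)
  qed
  moreover have "t' \<le> t"
    if t: "z \<le> t" "S t = None" "S t' = Some j" "r j \<le> t" for t t' j
  proof (rule ccontr)
    assume "\<not> t' \<le> t"
    then have "t < t'" by simp
    have "S(t := S t', t' := S t) \<in> reschedules z"
      using t \<open>t < t'\<close> reschedules_slot[OF SR t(3)]
      by (intro exchange_slots_reschedules[OF SR]) auto
    with S1 load late_load_move_earlier[OF fin t(1) \<open>t < t'\<close> t(2)] t(3) show False
      by (auto simp: is_arg_min_def)
  qed
  ultimately show thesis
    using SR by (intro that) (auto simp: edf_from_def work_conserving_from_def)
qed

lemma early_job_work_bound:
  assumes "j \<in> early_jobs"
  obtains c where "r j < c" "c \<le> \<theta>"
    "\<forall>w\<ge>r s. (\<Sum>i | 1 \<le> i \<and> i \<le> j \<and> w \<le> r i \<and> r i < c. p i) \<le> nat (c - w)"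
proof -
  obtain Sj where Sj: "sk_schedule n p r d s j Sj" "j \<in> sched_jobs Sj" "compl Sj j \<le> \<theta>"
    using edf assms by (auto simp: early_jobs_def)
  then have "valid_schedule n p r d Sj"
    by (simp add: sk_schedule_def)
  then have "r j < compl Sj j"
    using compl_last_slot(1)[OF finite_slots_if_finite_busy[OF finite_busy_valid_schedule] Sj(2)]
      valid_schedule_slot by fastforce
  with Sj show thesis
    using work_released_before_completion[OF d_mono Sj(1,2)] by (intro that) auto
qed

lemma busy_before_theta:
  assumes S: "S \<in> reschedules z" and z: "r s \<le> z" "z \<le> \<theta>"
    and nf: "edf_from r d z S" "work_conserving_from r z S"
    and start: "(\<exists>t. z \<le> t \<and> t < \<theta> \<and> S t = None) \<or> z = r s"
    and u: "S u = Some j"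
  shows "u < \<theta>"
proof (rule ccontr)
  assume "\<not> u < \<theta>"
  have j: "j \<in> early_jobs"
    using reschedules_slot[OF S u] by blast
  then obtain c where c: "r j < c" "c \<le> \<theta>"
    "\<forall>w\<ge>r s. (\<Sum>i | 1 \<le> i \<and> i \<le> j \<and> w \<le> r i \<and> r i < c. p i) \<le> nat (c - w)"
    by (rule early_job_work_bound)
  have "(\<exists>t. z \<le> t \<and> t < \<theta> \<and> S t = None) \<or> (\<forall>t i. S t = Some i \<longrightarrow> z \<le> r i)"
    using start reschedules_slot[OF S] by (auto simp: early_jobs_def)
  then obtain w where w: "z \<le> w" "w \<le> \<theta>"
    "\<forall>t. w \<le> t \<and> t < \<theta> \<longrightarrow> (\<exists>i. S t = Some i \<and> d i \<le> d j)"
    "\<forall>t i. w \<le> t \<longrightarrow> S t = Some i \<longrightarrow> d i \<le> d j \<longrightarrow> w \<le> r i"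
    using edf_block_start[OF nf _ z(2)] by blast
  \<comment> \<open>the jobs I fill [w, c) in S and also run at u, yet their work fits into [w, c)\<close>
  define I where "I = {i. 1 \<le> i \<and> i \<le> j \<and> w \<le> r i \<and> r i < c}"
  define U where "U = (\<Union>i\<in>I. {t. S t = Some i})"
  have "finite I"
    by (rule finite_subset[of _ "{..j}"]) (auto simp: I_def)
  have "finite U"
    unfolding U_def using finite_slots_if_finite_busy[OF finite_busy_reschedules[OF S]] \<open>finite I\<close> by simp
  have "{w..<c} \<subseteq> U - {u}"
  proof
    fix t assume t: "t \<in> {w..<c}"
    with c(2) w(3) obtain i where i: "S t = Some i" "d i \<le> d j"
      by auto
    have "i \<in> early_jobs" "r i \<le> t"
      using reschedules_slot[OF S i(1)] by auto
    with i(2) j have "i \<le> j"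
      using early_jobs_subset strict_mono_on_less_eq[OF d_mono] by blast
    with i w(4) t \<open>i \<in> early_jobs\<close> \<open>r i \<le> t\<close> have "i \<in> I"
      by (auto simp: I_def early_jobs_def)
    with i t c(2) \<open>\<not> u < \<theta>\<close> show "t \<in> U - {u}"
      by (auto simp: U_def)
  qed
  then have "nat (c - w) \<le> card (U - {u})"
    using \<open>finite U\<close> by (metis card_atLeastLessThan_int card_mono finite_Diff)
  also have "\<dots> < card U"
  proof -
    have "w \<le> r j"
      using w(2) w(4)[rule_format, of u j] u \<open>\<not> u < \<theta>\<close> by simp
    with j c(1) u have "u \<in> U"
      by (auto simp: U_def I_def early_jobs_def)
    with \<open>finite U\<close> show ?thesis
      by (rule card_Diff1_less)
  qed
  also have "\<dots> \<le> (\<Sum>i\<in>I. card {t. S t = Some i})"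
    unfolding U_def using \<open>finite I\<close> by (rule card_UN_le)
  also have "\<dots> \<le> (\<Sum>i\<in>I. p i)"
    by (intro sum_mono card_slots_reschedules_le[OF S])
  also have "\<dots> \<le> nat (c - w)"
    using c(3) z(1) w(1) by (simp add: I_def)
  finally show False
    by simp
qed

definition late_work :: "int \<Rightarrow> nat" where
  "late_work z = card {t. z \<le> t \<and> Q_early t \<noteq> None}"

lemma card_late_busy_reschedules:
  assumes S: "S \<in> reschedules z" and "z \<le> \<theta>"
  shows "card {t. z \<le> t \<and> S t \<noteq> None} = late_work z"
proof -
  have Q_early: "Q_early \<in> reschedules z"
    by (rule Q_early_in_reschedules[OF assms(2)])
  have split: "card (busy T) = card {t. t < z \<and> T t \<noteq> None} + card {t. z \<le> t \<and> T t \<noteq> None}"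
    if T: "T \<in> reschedules z" for T
  proof -
    have "busy T = {t. t < z \<and> T t \<noteq> None} \<union> {t. z \<le> t \<and> T t \<noteq> None}"
      by (auto simp: busy_def)
    moreover have "finite {t. t < z \<and> T t \<noteq> None}" "finite {t. z \<le> t \<and> T t \<noteq> None}"
      using finite_busy_reschedules[OF T] by (auto simp: busy_def intro: finite_subset)
    ultimately show ?thesis
      by (simp add: card_Un_disjoint disjoint_iff)
  qed
  have "{t. t < z \<and> S t \<noteq> None} = {t. t < z \<and> Q_early t \<noteq> None}"
    using reschedules_agree[OF S] reschedules_agree[OF Q_early] by auto
  then show ?thesis
    using split[OF S] split[OF Q_early] card_busy_reschedules[OF S] card_busy_reschedules[OF Q_early]
    by (simp add: late_work_def)
qed

lemma late_work_antimono: "z \<le> z' \<Longrightarrow> late_work z' \<le> late_work z"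
  unfolding late_work_def using finite_busy_reschedules[OF Q_early_in_reschedules[OF theta]]
  by (intro card_mono) (auto simp: busy_def intro: finite_subset)

lemma late_work_release: "int (late_work (r s)) \<le> \<theta> - r s"
proof -
  obtain S where S: "S \<in> reschedules (r s)" and nf: "edf_from r d (r s) S" "work_conserving_from r (r s) S"
    using normal_form_exists[OF theta] .
  have "{t. r s \<le> t \<and> S t \<noteq> None} \<subseteq> {r s..<\<theta>}"
    using busy_before_theta[OF S order_refl theta nf] by auto
  then have "card {t. r s \<le> t \<and> S t \<noteq> None} \<le> nat (\<theta> - r s)"
    by (metis card_atLeastLessThan_int card_mono finite_atLeastLessThan_int)
  then show ?thesis
    using card_late_busy_reschedules[OF S theta] theta by simp
qed

lemma split_point:
  obtains z where "r s \<le> z" "z \<le> \<theta>" "int (late_work z) = \<theta> - z"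
proof -
  define f where "f z = \<theta> - z - int (late_work z)" for z
  have "f z - 1 \<le> f (z + 1)" for z
    using late_work_antimono[of z "z + 1"] by (simp add: f_def)
  then obtain z where "r s \<le> z" "z \<le> \<theta>" "f z = 0"
    using discrete_intermediate_value[OF theta, of f] late_work_release by (force simp: f_def)
  then show thesis
    by (intro that) (auto simp: f_def)
qed

lemma normal_form_busy_exactly:
  assumes S: "S \<in> reschedules z" and z: "r s \<le> z" "z \<le> \<theta>" "int (late_work z) = \<theta> - z"
    and nf: "edf_from r d z S" "work_conserving_from r z S"
  shows "{t. z \<le> t \<and> S t \<noteq> None} = {z..<\<theta>}" and "S t \<noteq> None \<Longrightarrow> t < \<theta>"
proof -
  let ?B = "{t. z \<le> t \<and> S t \<noteq> None}"
  have card_B: "card ?B = card {z..<\<theta>}"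
    using card_late_busy_reschedules[OF S z(2)] z(3) by simp
  have "finite ?B"
    using finite_busy_reschedules[OF S] by (auto simp: busy_def intro: finite_subset)
  \<comment> \<open>an idle slot in [z, \<theta>) would leave too little room for the late work\<close>
  have "S t \<noteq> None" if t: "z \<le> t" "t < \<theta>" for t
  proof
    assume "S t = None"
    with t have "?B \<subseteq> {z..<\<theta>} - {t}"
      using busy_before_theta[OF S z(1,2) nf] by fastforce
    then have "card ?B \<le> card ({z..<\<theta>} - {t})"
      by (intro card_mono) auto
    also have "\<dots> < card {z..<\<theta>}"
      using t by (intro card_Diff1_less) auto
    finally show False
      using card_B by simp
  qed
  then have "{z..<\<theta>} \<subseteq> ?B"
    by auto
  then show fills: "?B = {z..<\<theta>}"
    using \<open>finite ?B\<close> card_B by (intro card_subset_eq[symmetric]) auto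
  show "S t \<noteq> None \<Longrightarrow> t < \<theta>"
    using fills z(2) by (cases "z \<le> t") auto
qed

lemma sched_jobs_reschedules:
  assumes S: "S \<in> reschedules z"
  shows "sched_jobs S = early_jobs"
proof
  show "sched_jobs S \<subseteq> early_jobs"
    using reschedules_slot[OF S] by (auto simp: sched_jobs_def)
  show "early_jobs \<subseteq> sched_jobs S"
  proof
    fix j assume j: "j \<in> early_jobs"
    then have "card {t. S t = Some j} \<noteq> 0"
      using reschedules_card[OF S] p_pos early_jobs_subset by fastforce
    then show "j \<in> sched_jobs S"
      by (auto simp: sched_jobs_def card_gt_0_iff)
  qed
qed

lemma valid_schedule_reschedules:
  assumes S: "S \<in> reschedules z" and nf: "edf_from r d z S"
  shows "valid_schedule n p r d S"
proof -
  have "d j \<le> d j'"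
    if t: "S t = Some j" "S t' = Some j'" "r j' \<le> t" "t \<le> t'" for t t' j j'
  proof (cases "z \<le> t")
    case True
    with nf t show ?thesis
      by (auto simp: edf_from_def)
  next
    case False
    \<comment> \<open>before z, S is Q, and every later slot of j' in S has a later slot of j' in Q\<close>
    then have "Q t = Some j"
      using t(1) reschedules_agree[OF S] by simp
    moreover obtain t'' where "t \<le> t''" "Q t'' = Some j'"
    proof (cases "z \<le> t'")
      case True
      then obtain t'' where "z \<le> t''" "Q t'' = Some j'"
        using reschedules_late_slot_late_in_Q[OF S _ t(2)] by blast
      with \<open>\<not> z \<le> t\<close> show thesis
        by (intro that[of t'']) auto
    next
      case False
      with reschedules_agree[OF S] t that show thesis
        by force
    qed
    ultimately show ?thesis
      using valid_schedule_edf[OF valid_Q] t(3) by blast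
  qed
  then show ?thesis
    using reschedules_slot[OF S] early_jobs_subset reschedules_card[OF S] sched_jobs_reschedules[OF S]
    unfolding valid_schedule_def sched_jobs_def by fastforce
qed

lemma release_le_cmax_reschedules:
  assumes S: "S \<in> reschedules z"
  shows "r s \<le> cmax r s S"
proof (rule cmax_ge_release[OF finite_busy_reschedules[OF S]], intro allI impI)
  fix t assume "S t \<noteq> None"
  then obtain j where "S t = Some j"
    by auto
  with reschedules_slot[OF S this] show "r s \<le> t"
    by (simp add: early_jobs_def)
qed

lemma sk_schedule_reschedules:
  assumes S: "S \<in> reschedules z" and nf: "edf_from r d z S"
    and before: "\<forall>t. S t \<noteq> None \<longrightarrow> t < \<theta>"
  shows "sk_schedule n p r d s k' S" and "cmax r s S \<le> \<theta>"
proof -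
  have fin: "finite (busy S)"
    by (rule finite_busy_reschedules[OF S])
  show "cmax r s S \<le> \<theta>"
    by (rule cmax_le[where r = r and s = s, OF fin before theta])
  moreover have "cmax r s Q \<le> d k'"
    using Q by (simp add: sk_schedule_def)
  moreover have "sched_jobs S = {j. 1 \<le> j \<and> j \<le> k' \<and> r s \<le> r j \<and> r j < cmax r s S}"
  proof -
    have "r j < cmax r s S" if "j \<in> early_jobs" for j
    proof -
      from that obtain t where "S t = Some j"
        using sched_jobs_reschedules[OF S] by (auto simp: sched_jobs_def)
      then show ?thesis
        using le_cmax[OF fin, of t r s] reschedules_slot[OF S] by fastforce
    qed
    with \<open>cmax r s S \<le> \<theta>\<close> show ?thesis
      unfolding sched_jobs_reschedules[OF S] by (auto simp: early_jobs_def)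
  qed
  ultimately show "sk_schedule n p r d s k' S"
    using valid_schedule_reschedules[OF S nf] Q_late by (simp add: sk_schedule_def)
qed

lemma card_gaps_normal_form:
  assumes S: "S \<in> reschedules z" and z: "z \<le> \<theta>" and fills: "{t. z \<le> t \<and> S t \<noteq> None} = {z..<\<theta>}"
  shows "card (gaps r s S) \<le> card (gaps r s Q)"
    and "cmax r s S < \<theta> \<Longrightarrow> card (gaps r s S) < card (gaps r s Q)"
proof -
  have agree: "\<forall>t<z. S t = Q t"
    using reschedules_agree[OF S] by blast
  have before: "S t \<noteq> None \<Longrightarrow> t < \<theta>" for t
    using fills z by (cases "z \<le> t") auto
  obtain tq where tq: "\<theta> \<le> tq" "Q tq \<noteq> None"
    by (rule Q_busy_after_theta)
  have "b \<le> z" if ab: "(a, b) \<in> gaps r s S" for a b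
  proof (rule ccontr)
    assume "\<not> b \<le> z"
    moreover have "b < \<theta>"
      using ab before by (auto simp: gaps_def)
    ultimately have "S (b - 1) \<noteq> None"
      using fills by auto
    with ab show False
      by (auto simp: gaps_def)
  qed
  then show "card (gaps r s S) \<le> card (gaps r s Q)"
    using tq z by (intro card_gaps_le_if_agree_below[where t = tq, OF agree _ finite_busy_Q]) auto
  assume early_end: "cmax r s S < \<theta>"
  then have "S (\<theta> - 1) = None"
    using le_cmax[OF finite_busy_reschedules[OF S], of "\<theta> - 1" r s] by force
  then have "\<theta> - 1 \<notin> {z..<\<theta>}"
    unfolding fills[symmetric] by simp
  with z have "z = \<theta>"
    by simp
  with \<open>S (\<theta> - 1) = None\<close> agree have idle: "Q (\<theta> - 1) = None"
    by simp
  have "r s \<le> \<theta> - 1"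
    using release_le_cmax_reschedules[OF S] early_end by simp
  moreover have "\<theta> - 1 < tq"
    using tq(1) by simp
  ultimately obtain a b where "(a, b) \<in> gaps r s Q" "a \<le> \<theta> - 1" "\<theta> - 1 < b"
    by (rule gap_around_idle_slot[OF finite_busy_Q _ idle _ tq(2)])
  moreover have "\<forall>t\<ge>z. S t = None"
    using before \<open>z = \<theta>\<close> by (meson not_le)
  ultimately show "card (gaps r s S) < card (gaps r s Q)"
    using \<open>z = \<theta>\<close> by (intro card_gaps_less_if_agree_below[OF agree _ finite_busy_Q]) auto
qed

lemma truncated_schedule_exists:
  obtains R where "sk_schedule n p r d s k' R" "early_jobs \<subseteq> sched_jobs R" "cmax r s R \<le> \<theta>"
    "card (gaps r s R) \<le> card (gaps r s Q)"
    "cmax r s R < \<theta> \<longrightarrow> card (gaps r s R) < card (gaps r s Q)"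
proof -
  obtain z where z: "r s \<le> z" "z \<le> \<theta>" "int (late_work z) = \<theta> - z"
    by (rule split_point)
  obtain S where S: "S \<in> reschedules z" and nf: "edf_from r d z S" "work_conserving_from r z S"
    using normal_form_exists[OF z(2)] .
  note busy = normal_form_busy_exactly[OF S z nf]
  show thesis
  proof (rule that)
    show "sk_schedule n p r d s k' S" "cmax r s S \<le> \<theta>"
      using sk_schedule_reschedules[OF S nf(1)] busy(2) by blast+
    show "early_jobs \<subseteq> sched_jobs S"
      by (simp add: sched_jobs_reschedules[OF S])
    show "card (gaps r s S) \<le> card (gaps r s Q)"
      "cmax r s S < \<theta> \<longrightarrow> card (gaps r s S) < card (gaps r s Q)"
      using card_gaps_normal_form[OF S z(2) busy(1)] by blast+
  qed
qed

end

theorem lemma8: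
  fixes n :: nat and p :: "nat \<Rightarrow> nat" and r d :: "nat \<Rightarrow> int"
    and s k' g :: nat and \<theta> :: int and Q :: schedule
  assumes p_pos: "\<forall>j \<in> {1..n}. 1 \<le> p j"
    and d_mono: "strict_mono_on {1..n} d"
    and r_inj: "inj_on r {1..n}"
    and feas: "feasible n p r d"
    and s: "s \<in> {1..n}" and k': "k' \<in> {1..n}"
    and theta: "r s \<le> \<theta>"
    and edf: "\<forall>j. 1 \<le> j \<and> j \<le> k' \<and> r s \<le> r j \<and> r j < \<theta> \<longrightarrow>
               (\<exists>S. sk_schedule n p r d s j S \<and> j \<in> sched_jobs S \<and> compl S j \<le> \<theta>)"
    and Q: "sk_schedule n p r d s k' Q"
    and Q_late: "cmax r s Q > \<theta>"
    and Q_gaps: "card (gaps r s Q) \<le> g"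
  shows "\<exists>R. sk_schedule n p r d s k' R \<and>
             {j. 1 \<le> j \<and> j \<le> k' \<and> r s \<le> r j \<and> r j < \<theta>} \<subseteq> sched_jobs R \<and>
             cmax r s R \<le> \<theta> \<and> card (gaps r s R) \<le> g \<and>
             (cmax r s R < \<theta> \<longrightarrow> card (gaps r s R) < g)"
proof -
  interpret truncation_setting n p r d s k' \<theta> Q
    using p_pos d_mono k' theta edf Q Q_late by unfold_locales
  obtain R where "sk_schedule n p r d s k' R" "early_jobs \<subseteq> sched_jobs R" "cmax r s R \<le> \<theta>"
    "card (gaps r s R) \<le> card (gaps r s Q)"
    "cmax r s R < \<theta> \<longrightarrow> card (gaps r s R) < card (gaps r s Q)"
    by (rule truncated_schedule_exists)
  with Q_gaps show ?thesis
    by (intro exI[of _ R]) (auto simp: early_jobs_def)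
qed

end
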